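(* Let $\Pi:\mathbb{R}^{3N}\to\mathbb{R}^6$, $\Pi(x)=(\Pi_1(x),\Pi_2(x))$ with $\Pi_i(x)=\sum_{j=1}^N\zeta_{ij}x_j$, $i=1,2$, where $\sum_j\zeta_{ij}=1$ for $i=1,2$ and $\zeta_{1j}\zeta_{2j}=0$ for all $j$ (each atom contributes to at most one CG particle). Let $C_i=\{j:\zeta_{ij}\neq0\}$. Then (i) $h(x)=\Big(\sum_j\frac{\zeta_{1j}}{\sum_k\zeta_{1k}^2}f_j(x),\ \sum_j\frac{\zeta_{2j}}{\sum_k\zeta_{2k}^2}f_j(x)\Big)$ and (ii) $h(x)=\Big(\sum_{j\in C_1}f_j(x),\ \sum_{j\in C_2}f_j(x)\Big)$ both satisfy (assuming $h\in L^1(\mu)$) $F^{\mathrm{PMF}}(z)=\mathbb{E}_\mu[h\mid\Pi=z]$ for all $z\in\mathbb{R}^6$.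
   Context: Standing setting: $\beta>0$; $U:\mathbb{R}^{3N}\to\mathbb{R}$ smooth with $Z=\int e^{-\beta U}dx<\infty$; $\mu(dx)=Z^{-1}e^{-\beta U}dx$; $x=(x_1,\dots,x_N)$, $x_j\in\mathbb{R}^3$; $f_j=-\nabla_{x_j}U$. $\bar\mu$ is the Lebesgue density of $\Pi_{\#}\mu$, assumed positive and $C^1$; $\bar U^{\mathrm{PMF}}(z)=-\beta^{-1}\log\bar\mu(z)-\beta^{-1}\log Z$; $F^{\mathrm{PMF}}=-\nabla_z\bar U^{\mathrm{PMF}}$; $\mathbb{E}_\mu[\cdot\mid\Pi=z]$ is conditional expectation given $\Pi=z$. Assume both $C_1,C_2$ nonempty so that $\Pi$ has rank 6. *)

theory Defs
  imports "HOL-Analysis.Analysis" "HOL-Probability.Probability"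
begin

text \<open>Smoothness (C-infinity): differentiable everywhere, and every first-order
  partial derivative is again smooth (coinductively, i.e. derivatives of all orders).\<close>
coinductive smooth_fun :: "('a::euclidean_space \<Rightarrow> real) \<Rightarrow> bool" where
  "(\<forall>x. g differentiable (at x)) \<Longrightarrow>
   (\<forall>b\<in>Basis. smooth_fun (\<lambda>x. frechet_derivative g (at x) b)) \<Longrightarrow> smooth_fun g"

definition C1_fun :: "('a::euclidean_space \<Rightarrow> real) \<Rightarrow> bool" where
  "C1_fun g \<longleftrightarrow> (\<forall>x. g differentiable (at x)) \<and>
     (\<forall>b\<in>Basis. continuous_on UNIV (\<lambda>x. frechet_derivative g (at x) b))"

definition grad :: "('a::euclidean_space \<Rightarrow> real) \<Rightarrow> 'a \<Rightarrow> 'a" where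
  "grad g x = (\<Sum>b\<in>Basis. frechet_derivative g (at x) b *\<^sub>R b)"

text \<open>Configuration space R^{3N}: x = (x_1,...,x_N), x_j in R^3, indices of type 'n (N = CARD('n)).
  Atomic force f_j = - grad_{x_j} U.\<close>
definition force :: "(real^3^'n \<Rightarrow> real) \<Rightarrow> 'n::finite \<Rightarrow> real^3^'n \<Rightarrow> real^3" where
  "force U j x = - (grad U x $ j)"

definition partition_fn :: "real \<Rightarrow> ('a::euclidean_space \<Rightarrow> real) \<Rightarrow> real" where
  "partition_fn \<beta> U = (\<integral>x. exp (- \<beta> * U x) \<partial>lborel)"

definition gibbs :: "real \<Rightarrow> ('a::euclidean_space \<Rightarrow> real) \<Rightarrow> 'a measure" where
  "gibbs \<beta> U = density lborel (\<lambda>x. ennreal (exp (- \<beta> * U x) / partition_fn \<beta> U))"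

definition cg_map :: "('n::finite \<Rightarrow> real) \<Rightarrow> ('n \<Rightarrow> real) \<Rightarrow> real^3^'n \<Rightarrow> (real^3) \<times> (real^3)" where
  "cg_map \<zeta>1 \<zeta>2 x = ((\<Sum>j\<in>UNIV. \<zeta>1 j *\<^sub>R x $ j), (\<Sum>j\<in>UNIV. \<zeta>2 j *\<^sub>R x $ j))"

definition pmf_potential :: "real \<Rightarrow> real \<Rightarrow> ('b \<Rightarrow> real) \<Rightarrow> 'b \<Rightarrow> real" where
  "pmf_potential \<beta> Z mubar z = - (1/\<beta>) * ln (mubar z) - (1/\<beta>) * ln Z"

definition pmf_force :: "real \<Rightarrow> real \<Rightarrow> ('b::euclidean_space \<Rightarrow> real) \<Rightarrow> 'b \<Rightarrow> 'b" where
  "pmf_force \<beta> Z mubar z = - grad (pmf_potential \<beta> Z mubar) z"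

text \<open>h is a version of E_mu[h | Pi] equal to F(Pi): componentwise, the (library) conditional
  expectation of h with respect to sigma(Pi) agrees mu-a.e. with F o Pi.\<close>
definition is_cond_exp_given :: "'a measure \<Rightarrow> ('a \<Rightarrow> 'b::euclidean_space) \<Rightarrow> ('a \<Rightarrow> 'c::euclidean_space) \<Rightarrow> ('b \<Rightarrow> 'c) \<Rightarrow> bool" where
  "is_cond_exp_given M P h F \<longleftrightarrow>
     (\<forall>c\<in>Basis. AE x in M.
        real_cond_exp M (vimage_algebra (space M) P borel) (\<lambda>y. h y \<bullet> c) x = F (P x) \<bullet> c)"

end

theory Submission
  imports Defs
begin

text \<open>Let \<open>\<rho>\<close> be the Gibbs density and \<open>\<mu>\<close> the density of its pushforward under the linear CG
  map \<open>\<Pi>\<close>. Translating \<open>x\<close> by \<open>t v\<close> translates \<open>\<Pi> x\<close> by \<open>t \<Pi> v\<close>, so differentiating at \<open>t = 0\<close>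
  gives \<open>\<integral>\<^bsub>\<Pi>\<^sup>-\<^sup>1(B)\<^esub> \<partial>\<^sub>v \<rho> = \<integral>\<^bsub>B\<^esub> \<partial>\<^sub>\<Pi>\<^sub>v \<mu>\<close> for boxes \<open>B\<close>, hence by uniqueness of measures for all Borel
  sets \<open>B\<close>. As \<open>\<partial>\<^sub>v \<rho> = \<beta> \<rho> h\<close> for \<open>h = -\<partial>\<^sub>v U\<close>, the conditional expectation of \<open>h\<close> given \<open>\<Pi>\<close> is
  \<open>\<partial>\<^sub>\<Pi>\<^sub>v \<mu> / (\<beta> \<mu>)\<close>, the \<open>\<Pi> v\<close>-component of the PMF force. Each component of either force
  estimator is \<open>-\<partial>\<^sub>v U\<close> for some \<open>v\<close> with \<open>\<Pi> v\<close> a coordinate direction: the weights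
  \<open>\<zeta>\<^sub>i\<^sub>j / \<Sigma>\<^sub>k \<zeta>\<^sub>i\<^sub>k\<^sup>2\<close> and the indicators of \<open>C\<^sub>i\<close> are both dual to \<open>\<Pi>\<close>.\<close>

section \<open>Differentiating integrals along translations\<close>

lemma borel_measurable_linear:
  fixes P :: "'a::euclidean_space \<Rightarrow> 'b::real_normed_vector"
  shows "linear P \<Longrightarrow> P \<in> borel_measurable borel"
  by (intro borel_measurable_continuous_onI linear_continuous_on linear_conv_bounded_linear[THEN iffD1])

lemma lborel_integral_translate:
  fixes f :: "'a::euclidean_space \<Rightarrow> real"
  assumes [measurable]: "f \<in> borel_measurable borel"
  shows "(\<integral>x. f (x + c) \<partial>lborel) = (\<integral>x. f x \<partial>lborel)"
proof -
  have "(\<integral>x. f x \<partial>lborel) = (\<integral>x. f x \<partial>distr lborel borel ((+) c))"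
    by (simp add: lborel_distr_plus)
  also have "\<dots> = (\<integral>x. f (x + c) \<partial>lborel)"
    by (subst integral_distr) (auto simp: add.commute)
  finally show ?thesis by simp
qed

lemma lborel_integrable_translate:
  fixes f :: "'a::euclidean_space \<Rightarrow> real"
  assumes [measurable]: "f \<in> borel_measurable borel"
  shows "integrable lborel (\<lambda>x. f (x + c)) \<longleftrightarrow> integrable lborel f"
proof -
  have "integrable lborel f \<longleftrightarrow> integrable (distr lborel borel ((+) c)) f"
    by (simp add: lborel_distr_plus)
  also have "\<dots> \<longleftrightarrow> integrable lborel (\<lambda>x. f (x + c))"
    by (subst integrable_distr_eq) (auto simp: add.commute)
  finally show ?thesis by simp
qed

lemma lborel_nn_integral_translate:
  fixes f :: "'a::euclidean_space \<Rightarrow> ennreal"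
  assumes [measurable]: "f \<in> borel_measurable borel"
  shows "(\<integral>\<^sup>+x. f (x + c) \<partial>lborel) = (\<integral>\<^sup>+x. f x \<partial>lborel)"
proof -
  have "(\<integral>\<^sup>+x. f x \<partial>lborel) = (\<integral>\<^sup>+x. f x \<partial>distr lborel borel ((+) c))"
    by (simp add: lborel_distr_plus)
  also have "\<dots> = (\<integral>\<^sup>+x. f (x + c) \<partial>lborel)"
    by (subst nn_integral_distr) (auto simp: add.commute)
  finally show ?thesis by simp
qed

text \<open>The fundamental theorem of calculus in \<open>s\<close> and Fubini turn the difference quotient into
  the mean of a continuous function over \<open>[0, t]\<close>.\<close>

lemma integral_translate_right_derivative:
  fixes w G G' :: "'a::euclidean_space \<Rightarrow> real" and v :: 'a
  assumes G'_cont: "continuous_on UNIV G'"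
    and G_deriv: "\<And>x t. ((\<lambda>s. G (x + s *\<^sub>R v)) has_real_derivative G' (x + t *\<^sub>R v)) (at t)"
    and G_int: "\<And>t. 0 \<le> t \<Longrightarrow> t \<le> 1 \<Longrightarrow> integrable lborel (\<lambda>x. w x * G (x + t *\<^sub>R v))"
    and G'_int: "\<And>t. 0 \<le> t \<Longrightarrow> t \<le> 1 \<Longrightarrow>
      integrable (lborel \<Otimes>\<^sub>M lborel) (\<lambda>(x, s). w x * (indicator {0..t} s *\<^sub>R G' (x + s *\<^sub>R v)))"
    and G'_int_cont: "continuous_on {0..1} (\<lambda>s. \<integral>x. w x * G' (x + s *\<^sub>R v) \<partial>lborel)"
  shows "((\<lambda>t. ((\<integral>x. w x * G (x + t *\<^sub>R v) \<partial>lborel) - (\<integral>x. w x * G x \<partial>lborel)) / t)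
           \<longlongrightarrow> (\<integral>x. w x * G' x \<partial>lborel)) (at_right 0)"
proof -
  define \<psi> where "\<psi> s = (\<integral>x. w x * G' (x + s *\<^sub>R v) \<partial>lborel)" for s
  define \<Phi> where "\<Phi> t = (\<integral>x. w x * G (x + t *\<^sub>R v) \<partial>lborel)" for t
  define H where "H u = integral {0..u} \<psi>" for u
  have \<Phi>_diff: "\<Phi> t - \<Phi> 0 = H t" if t: "0 \<le> t" "t \<le> 1" for t
  proof -
    have ftc: "G (x + t *\<^sub>R v) - G (x + 0 *\<^sub>R v) = (\<integral>s. indicator {0..t} s *\<^sub>R G' (x + s *\<^sub>R v) \<partial>lborel)" for x
    proof (rule integral_FTC_atLeastAtMost[symmetric])
      show "((\<lambda>s. G (x + s *\<^sub>R v)) has_vector_derivative G' (x + s *\<^sub>R v)) (at s within {0..t})" for s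
        using G_deriv[of x s] by (simp add: has_real_derivative_iff_has_vector_derivative has_vector_derivative_at_within)
      show "continuous_on {0..t} (\<lambda>s. G' (x + s *\<^sub>R v))"
        by (intro continuous_on_compose2[OF G'_cont] continuous_intros) auto
    qed fact
    have "\<Phi> t - \<Phi> 0 = (\<integral>x. w x * G (x + t *\<^sub>R v) - w x * G (x + 0 *\<^sub>R v) \<partial>lborel)"
      unfolding \<Phi>_def by (rule Bochner_Integration.integral_diff[symmetric]) (use G_int[of t] G_int[of 0] t in auto)
    also have "\<dots> = (\<integral>x. (\<integral>s. w x * (indicator {0..t} s *\<^sub>R G' (x + s *\<^sub>R v)) \<partial>lborel) \<partial>lborel)"
      by (intro Bochner_Integration.integral_cong refl) (simp only: integral_mult_right_zero ftc[symmetric] right_diff_distrib)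
    also have "\<dots> = (\<integral>s. (\<integral>x. w x * (indicator {0..t} s *\<^sub>R G' (x + s *\<^sub>R v)) \<partial>lborel) \<partial>lborel)"
      by (rule lborel_pair.Fubini_integral[symmetric]) (use G'_int t in simp)
    also have "\<dots> = (\<integral>s. indicator {0..t} s *\<^sub>R \<psi> s \<partial>lborel)"
      unfolding \<psi>_def by (intro Bochner_Integration.integral_cong refl) (auto simp: indicator_def)
    also have "\<dots> = H t - H 0"
      unfolding H_def
    proof (rule integral_FTC_atLeastAtMost)
      show \<psi>_cont: "continuous_on {0..t} \<psi>"
        unfolding \<psi>_def by (rule continuous_on_subset[OF G'_int_cont]) (use t in auto)
      show "((\<lambda>u. integral {0..u} \<psi>) has_vector_derivative \<psi> s) (at s within {0..t})" if "0 \<le> s" "s \<le> t" for s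
        using integral_has_vector_derivative[OF \<psi>_cont] that by auto
    qed fact
    finally show ?thesis by (simp add: H_def)
  qed
  have "(H has_real_derivative \<psi> 0) (at 0 within {0..1})"
    unfolding H_def by (rule integral_has_real_derivative) (use G'_int_cont in \<open>auto simp: \<psi>_def\<close>)
  then have "((\<lambda>y. H y / y) \<longlongrightarrow> \<psi> 0) (at_right 0)"
    by (simp add: has_field_derivative_iff at_within_Icc_at_right H_def)
  moreover have "\<forall>\<^sub>F t in at_right 0. H t / t = (\<Phi> t - \<Phi> 0) / t"
    unfolding eventually_at_right_field by (rule exI[of _ 1]) (auto simp: \<Phi>_diff)
  ultimately show ?thesis
    unfolding \<Phi>_def \<psi>_def by (simp add: tendsto_cong)
qed

lemma integrable_indicator_segment_translate:
  fixes w G :: "'a::euclidean_space \<Rightarrow> real" and v :: 'a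
  assumes G_int: "integrable lborel G" and [measurable]: "w \<in> borel_measurable borel"
    and w_bound: "\<And>x. \<bar>w x\<bar> \<le> 1"
  shows "integrable (lborel \<Otimes>\<^sub>M lborel) (\<lambda>(x, s). w x * (indicator {0..t} s *\<^sub>R G (x + s *\<^sub>R v)))"
proof (rule integrableI_bounded)
  have [measurable]: "G \<in> borel_measurable borel"
    using G_int by (simp add: borel_measurable_integrable)
  show "(\<lambda>(x, s). w x * (indicator {0..t} s *\<^sub>R G (x + s *\<^sub>R v))) \<in> borel_measurable (lborel \<Otimes>\<^sub>M lborel)"
    by measurable
  let ?N = "\<integral>\<^sup>+x. ennreal (norm (G x)) \<partial>lborel"
  have "(\<integral>\<^sup>+p. norm ((\<lambda>(x, s). w x * (indicator {0..t} s *\<^sub>R G (x + s *\<^sub>R v))) p) \<partial>(lborel \<Otimes>\<^sub>M lborel))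
      \<le> (\<integral>\<^sup>+p. ennreal (indicator {0..t} (snd p) * norm (G (fst p + snd p *\<^sub>R v))) \<partial>(lborel \<Otimes>\<^sub>M lborel))"
    using w_bound by (intro nn_integral_mono) (auto simp: indicator_def abs_mult mult_left_le_one_le)
  also have "\<dots> = (\<integral>\<^sup>+s. (\<integral>\<^sup>+x. indicator {0..t} s * ennreal (norm (G (x + s *\<^sub>R v))) \<partial>lborel) \<partial>lborel)"
    by (subst lborel_pair.nn_integral_snd[symmetric])
       (auto simp: case_prod_beta indicator_def intro!: nn_integral_cong)
  also have "\<dots> = (\<integral>\<^sup>+s. indicator {0..t} s * ?N \<partial>lborel)"
  proof -
    have "(\<integral>\<^sup>+x. ennreal (norm (G (x + c))) \<partial>lborel) = ?N" for c
      by (rule lborel_nn_integral_translate[where f="\<lambda>x. ennreal (norm (G x))"]) measurable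
    then show ?thesis by (simp add: nn_integral_cmult)
  qed
  also have "\<dots> = ?N * emeasure lborel {0..t}"
    using nn_integral_cmult_indicator[of "{0..t}" lborel ?N] by (simp add: mult.commute)
  also have "\<dots> < \<infinity>"
    using G_int by (auto simp: integrable_iff_bounded ennreal_mult_less_top emeasure_lborel_Icc_eq)
  finally show "(\<integral>\<^sup>+p. norm ((\<lambda>(x, s). w x * (indicator {0..t} s *\<^sub>R G (x + s *\<^sub>R v))) p) \<partial>(lborel \<Otimes>\<^sub>M lborel)) < \<infinity>" .
qed

lemma null_sets_translate_frontier_box:
  fixes a b d :: "'b::euclidean_space"
  shows "{z. z - d \<in> frontier (box a b)} \<in> null_sets lborel"
proof -
  have "closure (box a b) \<subseteq> cbox a b"
    by (rule closure_minimal) (auto simp: box_subset_cbox closed_cbox)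
  then have "frontier (box a b) \<subseteq> cbox a b - box a b"
    by (auto simp: frontier_def interior_open[OF open_box])
  then have "negligible ((+) d ` frontier (box a b))"
    by (intro negligible_translation negligible_subset[OF negligible_frontier_interval])
  moreover have "(+) d ` frontier (box a b) = {z. z - d \<in> frontier (box a b)}"
    by (auto simp: image_iff) (metis add.commute diff_add_cancel)
  moreover have "closed ((\<lambda>z. z - d) -` frontier (box a b))"
    by (intro closed_vimage continuous_intros) auto
  ultimately show ?thesis
    by (simp add: negligible_iff_null_sets null_sets_completion_iff borel_closed vimage_def)
qed

lemma AE_pushforward_density_not_in:
  fixes P :: "'a::euclidean_space \<Rightarrow> 'b::euclidean_space" and g :: "'a \<Rightarrow> real" and m :: "'b \<Rightarrow> real"
  assumes dens: "distr (density lborel g) lborel P = density lborel m"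
    and [measurable]: "P \<in> borel_measurable borel" "g \<in> borel_measurable borel"
      "m \<in> borel_measurable borel"
    and g_pos: "\<And>x. g x > 0"
    and N: "N \<in> null_sets lborel"
  shows "AE y in lborel. P y \<notin> N"
proof -
  have [measurable]: "N \<in> sets borel"
    using N by (simp add: null_sets_def)
  have "AE z in density lborel m. z \<notin> N"
    using AE_not_in[OF N] by (subst AE_density) (auto elim: AE_mp)
  then have "AE y in density lborel g. P y \<notin> N"
    unfolding dens[symmetric] by (subst (asm) AE_distr_iff) auto
  then show ?thesis
    using g_pos by (subst (asm) AE_density) (auto elim: AE_mp)
qed

lemma indicator_box_tendsto:
  fixes q :: "'b::euclidean_space"
  assumes "q \<notin> frontier (box a b)" and lim: "(f \<longlongrightarrow> q) F"
  shows "((\<lambda>n. indicator (box a b) (f n) :: real) \<longlongrightarrow> indicator (box a b) q) F"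
proof -
  consider "q \<in> box a b" | "q \<in> - closure (box a b)"
    using assms(1) by (auto simp: frontier_def interior_open[OF open_box])
  then have "\<forall>\<^sub>F n in F. indicator (box a b) (f n) = (indicator (box a b) q :: real)"
  proof cases
    case 1
    show ?thesis
      using topological_tendstoD[OF lim open_box 1] by eventually_elim (use 1 in auto)
  next
    case 2
    have "open (- closure (box a b))" by auto
    from topological_tendstoD[OF lim this 2] show ?thesis
      by eventually_elim (use 2 closure_subset in \<open>auto simp: indicator_def\<close>)
  qed
  then show ?thesis by (rule tendsto_eventually)
qed

lemma continuous_on_integral_indicator_box_translate:
  fixes h :: "'a::euclidean_space \<Rightarrow> real" and Q :: "'a \<Rightarrow> 'b::euclidean_space"
  assumes h_int: "integrable lborel h" and [measurable]: "Q \<in> borel_measurable borel"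
    and no_frontier: "\<And>d. AE y in lborel. Q y - d \<notin> frontier (box a b)"
  shows "continuous_on UNIV (\<lambda>s. \<integral>y. indicator (box a b) (Q y - s *\<^sub>R c) * h y \<partial>lborel)"
proof (rule continuous_on_sequentiallyI)
  fix u :: "nat \<Rightarrow> real" and s0 assume u: "u \<longlonglongrightarrow> s0"
  have [measurable]: "h \<in> borel_measurable borel"
    using h_int by (simp add: borel_measurable_integrable)
  show "(\<lambda>n. \<integral>y. indicator (box a b) (Q y - u n *\<^sub>R c) * h y \<partial>lborel) \<longlonglongrightarrow>
        (\<integral>y. indicator (box a b) (Q y - s0 *\<^sub>R c) * h y \<partial>lborel)"
  proof (rule integral_dominated_convergence[where w="\<lambda>y. norm (h y)"])
    show "AE y in lborel. norm (indicator (box a b) (Q y - u n *\<^sub>R c) * h y) \<le> norm (h y)" for n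
      by (auto simp: indicator_def)
    show "AE y in lborel. (\<lambda>n. indicator (box a b) (Q y - u n *\<^sub>R c) * h y) \<longlonglongrightarrow>
          indicator (box a b) (Q y - s0 *\<^sub>R c) * h y"
      using no_frontier[of "s0 *\<^sub>R c"]
    proof eventually_elim
      case (elim y)
      have "(\<lambda>n. Q y - u n *\<^sub>R c) \<longlonglongrightarrow> Q y - s0 *\<^sub>R c"
        by (intro tendsto_intros u)
      from indicator_box_tendsto[OF elim this] show ?case
        by (intro tendsto_intros)
    qed
  qed (use h_int in auto)
qed

lemma pullback_box_integral_right_derivative:
  fixes P :: "'a::euclidean_space \<Rightarrow> 'b::euclidean_space" and g g' :: "'a \<Rightarrow> real"
    and m :: "'b \<Rightarrow> real" and v :: 'a and c :: 'b
  assumes lin: "linear P" and Pv: "P v = c"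
    and g_pos: "\<And>x. g x > 0" and g'_cont: "continuous_on UNIV g'"
    and g_deriv: "\<And>x t. ((\<lambda>s. g (x + s *\<^sub>R v)) has_real_derivative g' (x + t *\<^sub>R v)) (at t)"
    and g_int: "integrable lborel g" and g'_int: "integrable lborel g'"
    and [measurable]: "m \<in> borel_measurable borel"
    and dens: "distr (density lborel g) lborel P = density lborel m"
  shows "((\<lambda>t. ((\<integral>x. indicator (box a b) (P x) * g (x + t *\<^sub>R v) \<partial>lborel)
                - (\<integral>x. indicator (box a b) (P x) * g x \<partial>lborel)) / t)
           \<longlongrightarrow> (\<integral>x. indicator (box a b) (P x) * g' x \<partial>lborel)) (at_right 0)"
proof (rule integral_translate_right_derivative[OF g'_cont g_deriv])
  have [measurable]: "P \<in> borel_measurable borel"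
    using lin by (rule borel_measurable_linear)
  have [measurable]: "g \<in> borel_measurable borel" "g' \<in> borel_measurable borel"
    using g_int g'_int by (simp_all add: borel_measurable_integrable)
  show "integrable lborel (\<lambda>x. indicator (box a b) (P x) * g (x + t *\<^sub>R v))" for t
  proof (rule Bochner_Integration.integrable_bound[where f="\<lambda>x. g (x + t *\<^sub>R v)"])
    show "integrable lborel (\<lambda>x. g (x + t *\<^sub>R v))"
      using g_int by (subst lborel_integrable_translate) auto
  qed (auto simp: indicator_def)
  show "integrable (lborel \<Otimes>\<^sub>M lborel)
      (\<lambda>(x, s). indicator (box a b) (P x) * (indicator {0..t} s *\<^sub>R g' (x + s *\<^sub>R v)))" for t
    by (rule integrable_indicator_segment_translate[OF g'_int]) auto
  have no_frontier: "AE y in lborel. P y - d \<notin> frontier (box a b)" for d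
    using AE_pushforward_density_not_in[OF dens _ _ _ g_pos null_sets_translate_frontier_box]
    by auto
  have "(\<integral>x. indicator (box a b) (P x) * g' (x + s *\<^sub>R v) \<partial>lborel)
      = (\<integral>y. indicator (box a b) (P y - s *\<^sub>R c) * g' y \<partial>lborel)" for s
    using lborel_integral_translate[where f="\<lambda>y. indicator (box a b) (P (y - s *\<^sub>R v)) * g' y" and c="s *\<^sub>R v"]
    by (simp add: Pv linear_diff[OF lin] linear_scale[OF lin])
  then show "continuous_on {0..1} (\<lambda>s. \<integral>x. indicator (box a b) (P x) * g' (x + s *\<^sub>R v) \<partial>lborel)"
    using continuous_on_integral_indicator_box_translate[OF g'_int _ no_frontier]
    by (auto intro: continuous_on_subset)
qed

lemma continuous_on_box_integral_translate:
  fixes h :: "'b::euclidean_space \<Rightarrow> real" and c :: 'b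
  assumes h_cont: "continuous_on UNIV h"
  shows "continuous_on {0..1} (\<lambda>s. \<integral>z. indicator (box a b) z * h (z + s *\<^sub>R c) \<partial>lborel)"
proof (rule continuous_on_sequentiallyI)
  fix u :: "nat \<Rightarrow> real" and s0
  assume u01: "\<forall>n. u n \<in> {0..1}" and u: "u \<longlonglongrightarrow> s0"
  have [measurable]: "h \<in> borel_measurable borel"
    using h_cont by (rule borel_measurable_continuous_onI)
  have "compact ((\<lambda>p. fst p + snd p *\<^sub>R c) ` (cbox a b \<times> {0..1}))"
    by (intro compact_continuous_image compact_Times continuous_intros) auto
  then obtain M where M_nonneg: "0 \<le> M" and M: "\<And>y. y \<in> (\<lambda>p. fst p + snd p *\<^sub>R c) ` (cbox a b \<times> {0..1}) \<Longrightarrow> norm (h y) \<le> M"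
    using continuous_on_compact_bound[of _ h] continuous_on_subset[OF h_cont] by (metis subset_UNIV)
  have M_bound: "norm (h (z + s *\<^sub>R c)) \<le> M" if "z \<in> cbox a b" "s \<in> {0..1}" for z s
    using that by (intro M) (auto intro!: image_eqI[where x="(z, s)"])
  show "(\<lambda>n. \<integral>z. indicator (box a b) z * h (z + u n *\<^sub>R c) \<partial>lborel) \<longlonglongrightarrow>
        (\<integral>z. indicator (box a b) z * h (z + s0 *\<^sub>R c) \<partial>lborel)"
  proof (rule integral_dominated_convergence[where w="\<lambda>z. indicator (cbox a b) z *\<^sub>R M"])
    show "integrable lborel (\<lambda>z. indicator (cbox a b) z *\<^sub>R M)"
      by (rule borel_integrable_compact) auto
    show "AE z in lborel. norm (indicator (box a b) z * h (z + u n *\<^sub>R c)) \<le> indicator (cbox a b) z *\<^sub>R M" for n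
      using box_subset_cbox[of a b] M_bound u01 M_nonneg by (auto simp: indicator_def subset_iff)
    show "AE z in lborel. (\<lambda>n. indicator (box a b) z * h (z + u n *\<^sub>R c)) \<longlonglongrightarrow> indicator (box a b) z * h (z + s0 *\<^sub>R c)"
    proof (intro AE_I2 tendsto_intros)
      fix z
      have "(\<lambda>n. z + u n *\<^sub>R c) \<longlonglongrightarrow> z + s0 *\<^sub>R c" by (intro tendsto_intros u)
      then show "(\<lambda>n. h (z + u n *\<^sub>R c)) \<longlonglongrightarrow> h (z + s0 *\<^sub>R c)"
        by (rule isCont_tendsto_compose[rotated]) (use h_cont in \<open>simp add: continuous_on_eq_continuous_at\<close>)
    qed
  qed measurable
qed

lemma box_integral_right_derivative:
  fixes m m' :: "'b::euclidean_space \<Rightarrow> real" and c :: 'b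
  assumes m_cont: "continuous_on UNIV m" and m'_cont: "continuous_on UNIV m'"
    and m_deriv: "\<And>z t. ((\<lambda>s. m (z + s *\<^sub>R c)) has_real_derivative m' (z + t *\<^sub>R c)) (at t)"
  shows "((\<lambda>t. ((\<integral>z. indicator (box a b) z * m (z + t *\<^sub>R c) \<partial>lborel)
                - (\<integral>z. indicator (box a b) z * m z \<partial>lborel)) / t)
           \<longlongrightarrow> (\<integral>z. indicator (box a b) z * m' z \<partial>lborel)) (at_right 0)"
proof (rule integral_translate_right_derivative[OF m'_cont m_deriv])
  have [measurable]: "m \<in> borel_measurable borel" "m' \<in> borel_measurable borel"
    using m_cont m'_cont by (simp_all add: borel_measurable_continuous_onI)
  show "integrable lborel (\<lambda>z. indicator (box a b) z * m (z + t *\<^sub>R c))" for t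
  proof (rule Bochner_Integration.integrable_bound[where f="\<lambda>z. indicator (cbox a b) z *\<^sub>R m (z + t *\<^sub>R c)"])
    show "integrable lborel (\<lambda>z. indicator (cbox a b) z *\<^sub>R m (z + t *\<^sub>R c))"
      by (rule borel_integrable_compact)
         (auto intro!: continuous_on_compose2[OF m_cont] continuous_intros)
  qed (use box_subset_cbox[of a b] in \<open>auto simp: indicator_def\<close>)
  show "integrable (lborel \<Otimes>\<^sub>M lborel)
      (\<lambda>(z, s). indicator (box a b) z * (indicator {0..t} s *\<^sub>R m' (z + s *\<^sub>R c)))" for t
  proof -
    have "integrable lborel (\<lambda>p::'b \<times> real. indicator (cbox a b \<times> {0..t}) p *\<^sub>R m' (fst p + snd p *\<^sub>R c))"
      by (rule borel_integrable_compact)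
         (auto intro!: compact_Times continuous_on_compose2[OF m'_cont] continuous_intros)
    then have "integrable lborel (\<lambda>(z, s). indicator (box a b) z * (indicator {0..t} s *\<^sub>R m' (z + s *\<^sub>R c)))"
    proof (rule Bochner_Integration.integrable_bound)
      show "(\<lambda>(z, s). indicator (box a b) z * (indicator {0..t} s *\<^sub>R m' (z + s *\<^sub>R c))) \<in> borel_measurable lborel"
        by (subst lborel_prod[symmetric]) measurable
    qed (use box_subset_cbox[of a b] in \<open>auto simp: indicator_def split: prod.splits\<close>)
    then show ?thesis by (simp add: lborel_prod)
  qed
  show "continuous_on {0..1} (\<lambda>s. \<integral>z. indicator (box a b) z * m' (z + s *\<^sub>R c) \<partial>lborel)"
    using m'_cont by (rule continuous_on_box_integral_translate)
qed

section \<open>Derivatives of a density and of its pushforward\<close>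

lemma
  fixes P :: "'a::euclidean_space \<Rightarrow> 'b::euclidean_space" and g :: "'a \<Rightarrow> real" and m :: "'b \<Rightarrow> real"
  assumes dens: "distr (density lborel g) lborel P = density lborel m"
    and [measurable]: "P \<in> borel_measurable borel" "g \<in> borel_measurable borel"
      "m \<in> borel_measurable borel" "\<phi> \<in> borel_measurable borel"
    and g_nonneg: "\<And>x. g x \<ge> 0" and m_nonneg: "\<And>z. m z \<ge> 0"
  shows integrable_pushforward_density_iff:
      "integrable lborel (\<lambda>x. g x * \<phi> (P x)) \<longleftrightarrow> integrable lborel (\<lambda>z. m z * \<phi> z)"
    and integral_pushforward_density:
      "(\<integral>x. g x * \<phi> (P x) \<partial>lborel) = (\<integral>z. m z * \<phi> z \<partial>lborel)"
proof -
  have "integrable lborel (\<lambda>x. g x * \<phi> (P x)) \<longleftrightarrow> integrable (density lborel g) (\<lambda>x. \<phi> (P x))"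
    by (subst integrable_density) (use g_nonneg in auto)
  also have "\<dots> \<longleftrightarrow> integrable (distr (density lborel g) lborel P) \<phi>"
    by (subst integrable_distr_eq) auto
  also have "\<dots> \<longleftrightarrow> integrable lborel (\<lambda>z. m z * \<phi> z)"
    unfolding dens by (subst integrable_density) (use m_nonneg in auto)
  finally show "integrable lborel (\<lambda>x. g x * \<phi> (P x)) \<longleftrightarrow> integrable lborel (\<lambda>z. m z * \<phi> z)" .
  have "(\<integral>x. g x * \<phi> (P x) \<partial>lborel) = (\<integral>x. \<phi> (P x) \<partial>density lborel g)"
    by (subst integral_density) (use g_nonneg in auto)
  also have "\<dots> = (\<integral>z. \<phi> z \<partial>distr (density lborel g) lborel P)"
    by (subst integral_distr) auto
  also have "\<dots> = (\<integral>z. m z * \<phi> z \<partial>lborel)"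
    unfolding dens by (subst integral_density) (use m_nonneg in auto)
  finally show "(\<integral>x. g x * \<phi> (P x) \<partial>lborel) = (\<integral>z. m z * \<phi> z \<partial>lborel)" .
qed

lemma box_integral_derivative_pushforward:
  fixes P :: "'a::euclidean_space \<Rightarrow> 'b::euclidean_space" and g g' :: "'a \<Rightarrow> real"
    and m m' :: "'b \<Rightarrow> real" and v :: 'a and c :: 'b
  assumes lin: "linear P" and Pv: "P v = c"
    and g_pos: "\<And>x. g x > 0" and g'_cont: "continuous_on UNIV g'"
    and g_deriv: "\<And>x t. ((\<lambda>s. g (x + s *\<^sub>R v)) has_real_derivative g' (x + t *\<^sub>R v)) (at t)"
    and g_int: "integrable lborel g" and g'_int: "integrable lborel g'"
    and m_cont: "continuous_on UNIV m" and m'_cont: "continuous_on UNIV m'"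
    and m_deriv: "\<And>z t. ((\<lambda>s. m (z + s *\<^sub>R c)) has_real_derivative m' (z + t *\<^sub>R c)) (at t)"
    and m_nonneg: "\<And>z. m z \<ge> 0"
    and dens: "distr (density lborel g) lborel P = density lborel m"
  shows "(\<integral>x. indicator (box a b) (P x) * g' x \<partial>lborel) = (\<integral>z. indicator (box a b) z * m' z \<partial>lborel)"
proof -
  have [measurable]: "P \<in> borel_measurable borel"
    using lin by (rule borel_measurable_linear)
  have [measurable]: "g \<in> borel_measurable borel" "m \<in> borel_measurable borel"
    using g_int m_cont by (simp_all add: borel_measurable_integrable borel_measurable_continuous_onI)
  have translate_eq: "(\<integral>x. indicator (box a b) (P x) * g (x + t *\<^sub>R v) \<partial>lborel)
      = (\<integral>z. indicator (box a b) z * m (z + t *\<^sub>R c) \<partial>lborel)" for t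
  proof -
    have "(\<integral>x. indicator (box a b) (P x) * g (x + t *\<^sub>R v) \<partial>lborel)
        = (\<integral>y. g y * indicator (box a b) (P y - t *\<^sub>R c) \<partial>lborel)"
      using lborel_integral_translate[where f="\<lambda>y. indicator (box a b) (P (y - t *\<^sub>R v)) * g y" and c="t *\<^sub>R v"]
      by (simp add: Pv linear_diff[OF lin] linear_scale[OF lin] mult.commute)
    also have "\<dots> = (\<integral>z. m z * indicator (box a b) (z - t *\<^sub>R c) \<partial>lborel)"
      by (rule integral_pushforward_density[OF dens]) (use g_pos less_imp_le m_nonneg in auto)
    also have "\<dots> = (\<integral>z. indicator (box a b) z * m (z + t *\<^sub>R c) \<partial>lborel)"
      using lborel_integral_translate[where f="\<lambda>z. m z * indicator (box a b) (z - t *\<^sub>R c)" and c="t *\<^sub>R c"]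
      by (simp add: mult.commute)
    finally show ?thesis .
  qed
  have "((\<lambda>t. ((\<integral>x. indicator (box a b) (P x) * g (x + t *\<^sub>R v) \<partial>lborel)
                - (\<integral>x. indicator (box a b) (P x) * g x \<partial>lborel)) / t)
           \<longlongrightarrow> (\<integral>x. indicator (box a b) (P x) * g' x \<partial>lborel)) (at_right 0)"
    by (rule pullback_box_integral_right_derivative[OF lin Pv g_pos g'_cont g_deriv g_int g'_int _ dens]) simp
  then have lim_translated: "((\<lambda>t. ((\<integral>z. indicator (box a b) z * m (z + t *\<^sub>R c) \<partial>lborel)
                - (\<integral>z. indicator (box a b) z * m z \<partial>lborel)) / t)
           \<longlongrightarrow> (\<integral>x. indicator (box a b) (P x) * g' x \<partial>lborel)) (at_right 0)"
    unfolding translate_eq translate_eq[of 0, simplified] .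
  show ?thesis
    by (rule tendsto_unique[OF trivial_limit_at_right_real lim_translated
          box_integral_right_derivative[OF m_cont m'_cont m_deriv]])
qed

lemma measure_eqI_boxes:
  fixes N1 N2 :: "'b::euclidean_space measure"
  assumes sets: "sets N1 = sets borel" "sets N2 = sets borel"
    and eq: "\<And>a b. emeasure N1 (box a b) = emeasure N2 (box a b)"
    and fin: "\<And>a b. emeasure N1 (box a b) \<noteq> \<infinity>"
  shows "N1 = N2"
proof (rule measure_eqI_generator_eq[where \<Omega>=UNIV and E="range (\<lambda>(a, b). box a b)"
      and A="\<lambda>i. box (- (real i *\<^sub>R One)) (real i *\<^sub>R One)"])
  have "sets borel = sigma_sets UNIV (range (\<lambda>(a, b). box a b :: 'b set))"
    by (subst borel_eq_box) (simp add: sets_measure_of)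
  then show "sets N1 = sigma_sets UNIV (range (\<lambda>(a, b). box a b))"
    and "sets N2 = sigma_sets UNIV (range (\<lambda>(a, b). box a b))"
    using sets by simp_all
qed (use eq fin UN_box_eq_UNIV in \<open>auto simp: Int_stable_def box_Int_box\<close>)

lemma nn_integral_pullback_eq_boxes:
  fixes u w :: "'a \<Rightarrow> real" and P :: "'a \<Rightarrow> 'b::euclidean_space"
  assumes [measurable]: "P \<in> M \<rightarrow>\<^sub>M borel" "u \<in> borel_measurable M" "w \<in> borel_measurable M"
    and nonneg: "\<And>x. u x \<ge> 0" "\<And>x. w x \<ge> 0"
    and box_int: "\<And>a b. integrable M (\<lambda>x. indicator (box a b) (P x) * u x)"
      "\<And>a b. integrable M (\<lambda>x. indicator (box a b) (P x) * w x)"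
    and box_eq: "\<And>a b. (\<integral>x. indicator (box a b) (P x) * u x \<partial>M) = (\<integral>x. indicator (box a b) (P x) * w x \<partial>M)"
    and [measurable]: "B \<in> sets borel"
  shows "(\<integral>\<^sup>+x. ennreal (indicator B (P x) * u x) \<partial>M) = (\<integral>\<^sup>+x. ennreal (indicator B (P x) * w x) \<partial>M)"
proof -
  have em_distr: "emeasure (distr (density M f) borel P) A = (\<integral>\<^sup>+x. ennreal (indicator A (P x) * f x) \<partial>M)"
    if [measurable]: "A \<in> sets borel" "f \<in> borel_measurable M" for A f
  proof -
    have "emeasure (distr (density M f) borel P) A = (\<integral>\<^sup>+x. ennreal (f x) * indicator (P -` A \<inter> space M) x \<partial>M)"
      by (subst emeasure_distr) (auto simp: emeasure_density)
    also have "\<dots> = (\<integral>\<^sup>+x. ennreal (indicator A (P x) * f x) \<partial>M)"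
      by (intro nn_integral_cong) (auto simp: indicator_def)
    finally show ?thesis .
  qed
  have "distr (density M u) borel P = distr (density M w) borel P"
  proof (rule measure_eqI_boxes)
    have box_nn: "(\<integral>\<^sup>+x. ennreal (indicator (box a b) (P x) * f x) \<partial>M) = ennreal (\<integral>x. indicator (box a b) (P x) * f x \<partial>M)"
      if "integrable M (\<lambda>x. indicator (box a b) (P x) * f x)" "\<And>x. f x \<ge> 0" for a b and f :: "'a \<Rightarrow> real"
      using that by (intro nn_integral_eq_integral) auto
    show "emeasure (distr (density M u) borel P) (box a b) = emeasure (distr (density M w) borel P) (box a b)"
      and "emeasure (distr (density M u) borel P) (box a b) \<noteq> \<infinity>" for a b
      by (simp_all add: em_distr box_nn box_int nonneg box_eq)
  qed simp_all
  then show ?thesis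
    by (metis em_distr assms(2,3,9))
qed

lemma integral_diff_eq_integral_diff:
  fixes f1 f2 f r :: "'a \<Rightarrow> real"
  assumes "integrable M f1" "integrable M f2" "integrable M f" "integrable M r"
    and "\<And>x. f1 x - f2 x = f x - r x"
  shows "integral\<^sup>L M f1 - integral\<^sup>L M f2 = integral\<^sup>L M f - integral\<^sup>L M r"
proof -
  have "integral\<^sup>L M f1 - integral\<^sup>L M f2 = (\<integral>x. f1 x - f2 x \<partial>M)"
    using assms(1,2) by (rule Bochner_Integration.integral_diff[symmetric])
  also have "\<dots> = (\<integral>x. f x - r x \<partial>M)"
    by (simp only: assms(5))
  also have "\<dots> = integral\<^sup>L M f - integral\<^sup>L M r"
    using assms(3,4) by (rule Bochner_Integration.integral_diff)
  finally show ?thesis .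
qed

lemma nn_integral_pullback_eq_boxes_diff:
  fixes f r u w :: "'a \<Rightarrow> real" and P :: "'a \<Rightarrow> 'b::euclidean_space"
  assumes P_meas: "P \<in> M \<rightarrow>\<^sub>M borel" and u_meas: "u \<in> borel_measurable M" and w_meas: "w \<in> borel_measurable M"
    and nonneg: "\<And>x. u x \<ge> 0" "\<And>x. w x \<ge> 0"
    and diff: "\<And>x. u x - w x = f x - r x"
    and box_int: "\<And>a b. integrable M (\<lambda>x. indicator (box a b) (P x) * u x)"
      "\<And>a b. integrable M (\<lambda>x. indicator (box a b) (P x) * w x)"
      "\<And>a b. integrable M (\<lambda>x. indicator (box a b) (P x) * f x)"
      "\<And>a b. integrable M (\<lambda>x. indicator (box a b) (P x) * r x)"
    and box_eq: "\<And>a b. (\<integral>x. indicator (box a b) (P x) * f x \<partial>M) = (\<integral>x. indicator (box a b) (P x) * r x \<partial>M)"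
    and A: "A \<in> sets borel"
  shows "(\<integral>\<^sup>+x. ennreal (indicator A (P x) * u x) \<partial>M) = (\<integral>\<^sup>+x. ennreal (indicator A (P x) * w x) \<partial>M)"
proof (rule nn_integral_pullback_eq_boxes[OF P_meas u_meas w_meas nonneg box_int(1,2) _ A])
  fix a b :: 'b
  have "(\<integral>x. indicator (box a b) (P x) * u x \<partial>M) - (\<integral>x. indicator (box a b) (P x) * w x \<partial>M)
      = (\<integral>x. indicator (box a b) (P x) * f x \<partial>M) - (\<integral>x. indicator (box a b) (P x) * r x \<partial>M)"
    by (rule integral_diff_eq_integral_diff[OF box_int]) (simp only: right_diff_distrib[symmetric] diff)
  then show "(\<integral>x. indicator (box a b) (P x) * u x \<partial>M) = (\<integral>x. indicator (box a b) (P x) * w x \<partial>M)"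
    using box_eq[of a b] by simp
qed

text \<open>The hypothesis says that the pushforwards of the positive and negative parts of
  \<open>f - g (q \<circ> P)\<close> agree. On \<open>P\<^sup>-\<^sup>1{q > 0}\<close> the integral of \<open>\<bar>g (q \<circ> P)\<bar>\<close> is then bounded by that of
  \<open>f\<^sup>+\<close>, and symmetrically on \<open>P\<^sup>-\<^sup>1{q < 0}\<close>.\<close>

lemma integrable_pullback_of_sign_balance:
  fixes f g :: "'a \<Rightarrow> real" and P :: "'a \<Rightarrow> 'b::euclidean_space" and q :: "'b \<Rightarrow> real"
  assumes f_int: "integrable M f"
    and [measurable]: "P \<in> M \<rightarrow>\<^sub>M borel" "g \<in> borel_measurable M" "q \<in> borel_measurable borel"
    and g_nonneg: "\<And>x. g x \<ge> 0"
    and balance: "\<And>A. A \<in> sets borel \<Longrightarrow>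
      (\<integral>\<^sup>+x. ennreal (indicator A (P x) * (max 0 (f x) + max 0 (- (g x * q (P x))))) \<partial>M)
      = (\<integral>\<^sup>+x. ennreal (indicator A (P x) * (max 0 (- f x) + max 0 (g x * q (P x)))) \<partial>M)"
  shows "integrable M (\<lambda>x. g x * q (P x))"
proof -
  define r where "r x = g x * q (P x)" for x
  define f1 where "f1 x = max 0 (f x) + max 0 (- r x)" for x
  define f2 where "f2 x = max 0 (- f x) + max 0 (r x)" for x
  have [measurable]: "f \<in> borel_measurable M" "r \<in> borel_measurable M"
    using f_int unfolding r_def by measurable
  have [measurable]: "f1 \<in> borel_measurable M" "f2 \<in> borel_measurable M"
    unfolding f1_def f2_def by measurable
  have nn_eq: "(\<integral>\<^sup>+x. ennreal (indicator A (P x) * f1 x) \<partial>M) = (\<integral>\<^sup>+x. ennreal (indicator A (P x) * f2 x) \<partial>M)"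
    if "A \<in> sets borel" for A
    using balance[OF that] by (simp only: f1_def f2_def r_def)
  have r_sign: "q (P x) > 0 \<Longrightarrow> r x \<ge> 0" "q (P x) < 0 \<Longrightarrow> r x \<le> 0" for x
    using g_nonneg[of x] by (simp_all add: r_def mult_nonneg_nonpos)
  let ?N = "\<integral>\<^sup>+x. ennreal (norm (f x)) \<partial>M"
  have "(\<integral>\<^sup>+x. ennreal (norm (r x)) \<partial>M)
      \<le> (\<integral>\<^sup>+x. ennreal (indicator {z. q z > 0} (P x) * f2 x) + ennreal (indicator {z. q z < 0} (P x) * f1 x) \<partial>M)"
    using g_nonneg
    by (intro nn_integral_mono)
       (auto simp: r_def f1_def f2_def indicator_def abs_mult mult_pos_neg zero_less_mult_iff
             intro!: ennreal_leI)
  also have "\<dots> = (\<integral>\<^sup>+x. ennreal (indicator {z. q z > 0} (P x) * f1 x) \<partial>M)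
      + (\<integral>\<^sup>+x. ennreal (indicator {z. q z < 0} (P x) * f2 x) \<partial>M)"
    by (simp add: nn_integral_add nn_eq)
  also have "\<dots> \<le> ?N + ?N"
    using r_sign
    by (intro add_mono nn_integral_mono ennreal_leI) (auto simp: f1_def f2_def indicator_def)
  also have "\<dots> < \<infinity>"
    using f_int by (simp add: integrable_iff_bounded)
  finally have r_int: "integrable M r"
    by (intro integrableI_bounded) auto
  then show ?thesis
    by (simp add: r_def[abs_def])
qed

lemma integral_pullback_eq_boxes:
  fixes f g :: "'a \<Rightarrow> real" and P :: "'a \<Rightarrow> 'b::euclidean_space" and q :: "'b \<Rightarrow> real"
  assumes f_int: "integrable M f"
    and P_meas[measurable]: "P \<in> M \<rightarrow>\<^sub>M borel" and g_meas[measurable]: "g \<in> borel_measurable M"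
    and q_meas[measurable]: "q \<in> borel_measurable borel"
    and g_nonneg: "\<And>x. g x \<ge> 0"
    and box_int: "\<And>a b. integrable M (\<lambda>x. indicator (box a b) (P x) * (g x * q (P x)))"
    and box_eq: "\<And>a b. (\<integral>x. indicator (box a b) (P x) * f x \<partial>M)
                     = (\<integral>x. indicator (box a b) (P x) * (g x * q (P x)) \<partial>M)"
  shows "integrable M (\<lambda>x. g x * q (P x))"
    and "B \<in> sets borel \<Longrightarrow> (\<integral>x. indicator B (P x) * f x \<partial>M) = (\<integral>x. indicator B (P x) * (g x * q (P x)) \<partial>M)"
proof -
  define r where "r x = g x * q (P x)" for x
  define f1 where "f1 x = max 0 (f x) + max 0 (- r x)" for x
  define f2 where "f2 x = max 0 (- f x) + max 0 (r x)" for x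
  have [measurable]: "f \<in> borel_measurable M" "r \<in> borel_measurable M"
    using f_int unfolding r_def by measurable
  have f12_meas[measurable]: "f1 \<in> borel_measurable M" "f2 \<in> borel_measurable M"
    unfolding f1_def f2_def by measurable
  have f12_nonneg: "f1 x \<ge> 0" "f2 x \<ge> 0" for x
    by (simp_all add: f1_def f2_def)
  have f12: "f1 x - f2 x = f x - r x" for x
    unfolding f1_def f2_def by auto
  have ind_int: "integrable M (\<lambda>x. indicator A (P x) * f x)" if [measurable]: "A \<in> sets borel" for A
    by (rule Bochner_Integration.integrable_bound[OF f_int]) (auto simp: indicator_def)
  have box_int_f12: "integrable M (\<lambda>x. indicator (box a b) (P x) * f1 x)"
    "integrable M (\<lambda>x. indicator (box a b) (P x) * f2 x)" for a b
  proof -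
    have ind_max: "indicator A z * max 0 y = max 0 (indicator A z * y :: real)" for A z y
      by (auto simp: indicator_def)
    show "integrable M (\<lambda>x. indicator (box a b) (P x) * f1 x)"
      "integrable M (\<lambda>x. indicator (box a b) (P x) * f2 x)"
      using ind_int[of "box a b"] box_int[of a b]
      unfolding f1_def f2_def r_def distrib_left ind_max mult_minus_right
      by (auto intro!: Bochner_Integration.integrable_add integrable_max)
  qed
  have nn_eq: "(\<integral>\<^sup>+x. ennreal (indicator A (P x) * f1 x) \<partial>M) = (\<integral>\<^sup>+x. ennreal (indicator A (P x) * f2 x) \<partial>M)"
    if "A \<in> sets borel" for A
  proof (rule nn_integral_pullback_eq_boxes_diff[OF P_meas f12_meas f12_nonneg f12 box_int_f12
        ind_int[OF borel_open[OF open_box]] box_int[folded r_def] _ that])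
    show "(\<integral>x. indicator (box a b) (P x) * f x \<partial>M) = (\<integral>x. indicator (box a b) (P x) * r x \<partial>M)" for a b
      using box_eq[of a b] by (simp only: r_def)
  qed
  have r_int: "integrable M r"
    unfolding r_def[abs_def]
    by (rule integrable_pullback_of_sign_balance[OF f_int P_meas g_meas q_meas g_nonneg
          nn_eq[unfolded f1_def f2_def r_def]])
  then show "integrable M (\<lambda>x. g x * q (P x))"
    by (simp add: r_def[abs_def])
  assume [measurable]: "B \<in> sets borel"
  have bound_int: "integrable M (\<lambda>x. \<bar>f x\<bar> + \<bar>r x\<bar>)"
    using f_int r_int by auto
  have f12_int: "integrable M (\<lambda>x. indicator B (P x) * f1 x)" "integrable M (\<lambda>x. indicator B (P x) * f2 x)"
    by (rule Bochner_Integration.integrable_bound[OF bound_int]; auto simp: indicator_def f1_def f2_def)+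
  have "ennreal (\<integral>x. indicator B (P x) * f1 x \<partial>M) = ennreal (\<integral>x. indicator B (P x) * f2 x \<partial>M)"
    using nn_eq[of B] f12_int f12_nonneg by (simp add: nn_integral_eq_integral)
  then have "(\<integral>x. indicator B (P x) * f1 x \<partial>M) = (\<integral>x. indicator B (P x) * f2 x \<partial>M)"
    using f12_nonneg by (subst (asm) ennreal_inj) (auto intro!: integral_nonneg_AE)
  moreover have "integrable M (\<lambda>x. indicator B (P x) * r x)"
    by (rule Bochner_Integration.integrable_bound[OF r_int]) (auto simp: indicator_def)
  then have "(\<integral>x. indicator B (P x) * f1 x \<partial>M) - (\<integral>x. indicator B (P x) * f2 x \<partial>M)
      = (\<integral>x. indicator B (P x) * f x \<partial>M) - (\<integral>x. indicator B (P x) * r x \<partial>M)"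
    by (rule integral_diff_eq_integral_diff[OF f12_int ind_int[OF \<open>B \<in> sets borel\<close>]])
       (simp only: right_diff_distrib[symmetric] f12)
  ultimately show "(\<integral>x. indicator B (P x) * f x \<partial>M) = (\<integral>x. indicator B (P x) * (g x * q (P x)) \<partial>M)"
    by (simp add: r_def)
qed

lemma pushforward_density_derivative:
  fixes P :: "'a::euclidean_space \<Rightarrow> 'b::euclidean_space" and g g' :: "'a \<Rightarrow> real"
    and m m' :: "'b \<Rightarrow> real" and v :: 'a and c :: 'b
  assumes lin: "linear P" and Pv: "P v = c"
    and g_pos: "\<And>x. g x > 0" and g'_cont: "continuous_on UNIV g'"
    and g_deriv: "\<And>x t. ((\<lambda>s. g (x + s *\<^sub>R v)) has_real_derivative g' (x + t *\<^sub>R v)) (at t)"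
    and g_int: "integrable lborel g" and g'_int: "integrable lborel g'"
    and m_cont: "continuous_on UNIV m" and m'_cont: "continuous_on UNIV m'"
    and m_deriv: "\<And>z t. ((\<lambda>s. m (z + s *\<^sub>R c)) has_real_derivative m' (z + t *\<^sub>R c)) (at t)"
    and m_pos: "\<And>z. m z > 0"
    and dens: "distr (density lborel g) lborel P = density lborel m"
  shows "integrable lborel (\<lambda>x. g x * (m' (P x) / m (P x)))"
    and "B \<in> sets borel \<Longrightarrow>
      (\<integral>x. indicator B (P x) * g' x \<partial>lborel) = (\<integral>x. indicator B (P x) * (g x * (m' (P x) / m (P x))) \<partial>lborel)"
proof -
  have [measurable]: "P \<in> borel_measurable borel"
    using lin by (rule borel_measurable_linear)
  have [measurable]: "g \<in> borel_measurable borel" "m \<in> borel_measurable borel" "m' \<in> borel_measurable borel"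
    using g_int m_cont m'_cont by (simp_all add: borel_measurable_integrable borel_measurable_continuous_onI)
  have g_nonneg: "g x \<ge> 0" and m_nonneg: "m z \<ge> 0" for x z
    using g_pos[of x] m_pos[of z] by simp_all
  have box_pushforward: "(\<integral>x. indicator (box a b) (P x) * (g x * (m' (P x) / m (P x))) \<partial>lborel)
      = (\<integral>z. indicator (box a b) z * m' z \<partial>lborel)"
    "integrable lborel (\<lambda>x. indicator (box a b) (P x) * (g x * (m' (P x) / m (P x))))
      \<longleftrightarrow> integrable lborel (\<lambda>z. indicator (box a b) z * m' z)" for a b
  proof -
    have "(\<lambda>z. m z * (indicator (box a b) z * (m' z / m z))) = (\<lambda>z. indicator (box a b) z * m' z)"
      using m_pos by (auto simp: fun_eq_iff less_imp_neq[symmetric])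
    moreover have "(\<lambda>x. g x * (indicator (box a b) (P x) * (m' (P x) / m (P x))))
        = (\<lambda>x. indicator (box a b) (P x) * (g x * (m' (P x) / m (P x))))"
      by (simp add: fun_eq_iff mult.left_commute)
    ultimately show "(\<integral>x. indicator (box a b) (P x) * (g x * (m' (P x) / m (P x))) \<partial>lborel)
      = (\<integral>z. indicator (box a b) z * m' z \<partial>lborel)"
    "integrable lborel (\<lambda>x. indicator (box a b) (P x) * (g x * (m' (P x) / m (P x))))
      \<longleftrightarrow> integrable lborel (\<lambda>z. indicator (box a b) z * m' z)"
      using integral_pushforward_density[OF dens, of "\<lambda>z. indicator (box a b) z * (m' z / m z)"]
        integrable_pushforward_density_iff[OF dens, of "\<lambda>z. indicator (box a b) z * (m' z / m z)"]
      by (simp_all add: g_nonneg m_nonneg)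
  qed
  have "integrable lborel (\<lambda>z. indicator (box a b) z * m' z)" for a b
  proof (rule Bochner_Integration.integrable_bound[where f="\<lambda>z. indicator (cbox a b) z *\<^sub>R m' z"])
    show "integrable lborel (\<lambda>z. indicator (cbox a b) z *\<^sub>R m' z)"
      by (rule borel_integrable_compact) (auto intro: continuous_on_subset[OF m'_cont])
  qed (use box_subset_cbox[of a b] in \<open>auto simp: indicator_def\<close>)
  then show "integrable lborel (\<lambda>x. g x * (m' (P x) / m (P x)))"
    and "B \<in> sets borel \<Longrightarrow>
      (\<integral>x. indicator B (P x) * g' x \<partial>lborel) = (\<integral>x. indicator B (P x) * (g x * (m' (P x) / m (P x))) \<partial>lborel)"
    using integral_pullback_eq_boxes[OF g'_int, of P g "\<lambda>z. m' z / m z"] g_nonneg box_pushforward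
      box_integral_derivative_pushforward[OF lin Pv g_pos g'_cont g_deriv g_int g'_int m_cont m'_cont m_deriv m_nonneg dens]
    by auto
qed

section \<open>Conditional expectation given the CG map\<close>

lemma real_cond_exp_vimage_eqI:
  fixes P :: "'a \<Rightarrow> 'b" and f :: "'a \<Rightarrow> real" and \<phi> :: "'b \<Rightarrow> real"
  assumes "finite_measure M" and P_meas[measurable]: "P \<in> M \<rightarrow>\<^sub>M N" and [measurable]: "\<phi> \<in> borel_measurable N"
    and f_int: "integrable M f" and \<phi>_int: "integrable M (\<lambda>x. \<phi> (P x))"
    and eq: "\<And>B. B \<in> sets N \<Longrightarrow> (\<integral>x. indicator B (P x) * f x \<partial>M) = (\<integral>x. indicator B (P x) * \<phi> (P x) \<partial>M)"
  shows "AE x in M. real_cond_exp M (vimage_algebra (space M) P N) f x = \<phi> (P x)"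
proof -
  let ?F = "vimage_algebra (space M) P N"
  have sets_F: "sets ?F = {P -` B \<inter> space M | B. B \<in> sets N}"
    using P_meas by (intro sets_vimage_algebra2) (auto simp: measurable_def)
  have "subalgebra M ?F"
    unfolding subalgebra_def by (auto simp: sets_F)
  with \<open>finite_measure M\<close> interpret finite_measure_subalgebra M ?F
    by (simp add: finite_measure_subalgebra_def finite_measure_subalgebra_axioms_def)
  show ?thesis
  proof (rule real_cond_exp_charact)
    fix A assume "A \<in> sets ?F"
    then obtain B where [measurable]: "B \<in> sets N" and A: "A = P -` B \<inter> space M"
      by (auto simp: sets_F)
    have "(\<integral>x\<in>A. h x \<partial>M) = (\<integral>x. indicator B (P x) * h x \<partial>M)" for h :: "'a \<Rightarrow> real"
      unfolding set_lebesgue_integral_def A by (intro Bochner_Integration.integral_cong) (auto simp: indicator_def)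
    then show "(\<integral>x\<in>A. f x \<partial>M) = (\<integral>x\<in>A. \<phi> (P x) \<partial>M)"
      by (simp add: eq)
  next
    show "(\<lambda>x. \<phi> (P x)) \<in> borel_measurable ?F"
      using P_meas by (intro measurable_compose[OF measurable_vimage_algebra1]) (auto simp: measurable_def)
  qed (use f_int \<phi>_int in auto)
qed

lemma grad_inner_Basis:
  fixes f :: "'a::euclidean_space \<Rightarrow> real"
  assumes "c \<in> Basis"
  shows "grad f x \<bullet> c = frechet_derivative f (at x) c"
  using assms by (simp add: grad_def inner_sum_left inner_Basis if_distrib cong: if_cong)

lemma smooth_fun_imp_C1_fun:
  assumes "smooth_fun g"
  shows "C1_fun g"
  unfolding C1_fun_def
proof safe
  show "g differentiable at x" for x
    using assms by (cases rule: smooth_fun.cases) auto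
  fix b :: 'a assume "b \<in> Basis"
  with assms have "smooth_fun (\<lambda>x. frechet_derivative g (at x) b)"
    by (cases rule: smooth_fun.cases) auto
  then have "\<forall>x. (\<lambda>x. frechet_derivative g (at x) b) differentiable (at x)"
    by (cases rule: smooth_fun.cases) auto
  then show "continuous_on UNIV (\<lambda>x. frechet_derivative g (at x) b)"
    by (simp add: continuous_at_imp_continuous_on differentiable_imp_continuous_within)
qed

lemma C1_fun_imp_continuous_on:
  "C1_fun g \<Longrightarrow> continuous_on UNIV g"
  unfolding C1_fun_def by (simp add: continuous_at_imp_continuous_on differentiable_imp_continuous_within)

lemma C1_fun_continuous_on_frechet_derivative:
  fixes g :: "'a::euclidean_space \<Rightarrow> real"
  assumes "C1_fun g"
  shows "continuous_on UNIV (\<lambda>x. frechet_derivative g (at x) v)"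
proof -
  have "frechet_derivative g (at x) v = (\<Sum>b\<in>Basis. (v \<bullet> b) * frechet_derivative g (at x) b)" for x
  proof -
    have "g differentiable (at x)"
      using assms by (simp add: C1_fun_def)
    then have "linear (frechet_derivative g (at x))"
      using frechet_derivative_works has_derivative_linear by blast
    then show ?thesis
      by (subst (1) euclidean_representation[of v, symmetric]) (simp add: linear_sum linear_scale)
  qed
  moreover have "continuous_on UNIV (\<lambda>x. \<Sum>b\<in>Basis. (v \<bullet> b) * frechet_derivative g (at x) b)"
    using assms by (intro continuous_intros) (auto simp: C1_fun_def)
  ultimately show ?thesis by simp
qed

lemma has_real_derivative_along_line:
  fixes g :: "'a::euclidean_space \<Rightarrow> real"
  assumes "g differentiable (at (x + t *\<^sub>R v))"
  shows "((\<lambda>s. g (x + s *\<^sub>R v)) has_real_derivative frechet_derivative g (at (x + t *\<^sub>R v)) v) (at t)"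
proof -
  let ?D = "frechet_derivative g (at (x + t *\<^sub>R v))"
  have g': "(g has_derivative ?D) (at (x + t *\<^sub>R v))"
    using assms frechet_derivative_works by blast
  have "((\<lambda>s. x + s *\<^sub>R v) has_derivative (\<lambda>h. h *\<^sub>R v)) (at t)"
    by (auto intro!: derivative_eq_intros)
  from has_derivative_compose[OF this g'] have "((\<lambda>s. g (x + s *\<^sub>R v)) has_derivative (\<lambda>h. h *\<^sub>R ?D v)) (at t)"
    by (simp add: o_def linear_scale[OF has_derivative_linear[OF g']])
  then show ?thesis
    by (simp add: has_real_derivative_iff_has_vector_derivative has_vector_derivative_def)
qed

lemma pmf_force_inner_Basis:
  fixes m :: "'b::euclidean_space \<Rightarrow> real"
  assumes "c \<in> Basis" and "\<beta> > 0" and "m differentiable (at z)" and "m z > 0"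
  shows "pmf_force \<beta> Z m z \<bullet> c = frechet_derivative m (at z) c / (\<beta> * m z)"
proof -
  have "(m has_derivative frechet_derivative m (at z)) (at z)"
    using assms(3) frechet_derivative_works by blast
  then have "(pmf_potential \<beta> Z m has_derivative (\<lambda>k. - (1/\<beta>) * (frechet_derivative m (at z) k / m z))) (at z)"
    unfolding pmf_potential_def[abs_def] using assms(2,4)
    by (auto intro!: derivative_eq_intros simp: field_simps)
  then have "frechet_derivative (pmf_potential \<beta> Z m) (at z) = (\<lambda>k. - (1/\<beta>) * (frechet_derivative m (at z) k / m z))"
    by (rule frechet_derivative_at[symmetric])
  then show ?thesis
    using assms(1) by (simp add: pmf_force_def grad_inner_Basis field_simps)
qed

lemma partition_fn_pos:
  fixes U :: "'a::euclidean_space \<Rightarrow> real"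
  assumes "integrable lborel (\<lambda>x. exp (- \<beta> * U x))"
  shows "partition_fn \<beta> U > 0"
proof -
  have "(\<integral>x. exp (- \<beta> * U x) \<partial>lborel) \<noteq> 0"
  proof
    assume "(\<integral>x. exp (- \<beta> * U x) \<partial>lborel) = 0"
    then have "AE x in lborel. exp (- \<beta> * U x) = 0"
      using integral_nonneg_eq_0_iff_AE[OF assms] by auto
    then have "space (lborel :: 'a measure) \<in> null_sets lborel"
      by (simp add: AE_iff_null_sets eventually_ae_filter)
    then show False
      by (auto simp: null_sets_def emeasure_lborel_UNIV)
  qed
  moreover have "0 \<le> (\<integral>x. exp (- \<beta> * U x) \<partial>lborel)"
    by (rule integral_nonneg_AE) auto
  ultimately show ?thesis
    unfolding partition_fn_def by linarith
qed

lemma prob_space_gibbs: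
  fixes U :: "'a::euclidean_space \<Rightarrow> real"
  assumes Z_finite: "integrable lborel (\<lambda>x. exp (- \<beta> * U x))"
  shows "prob_space (gibbs \<beta> U)"
proof
  have Z_pos: "partition_fn \<beta> U > 0"
    using Z_finite by (rule partition_fn_pos)
  have [measurable]: "(\<lambda>x. exp (- \<beta> * U x)) \<in> borel_measurable lborel"
    using Z_finite by (rule borel_measurable_integrable)
  then have "(\<lambda>x. ennreal (exp (- \<beta> * U x) / partition_fn \<beta> U)) \<in> borel_measurable lborel"
    by measurable
  then have "emeasure (gibbs \<beta> U) (space (gibbs \<beta> U)) = (\<integral>\<^sup>+x. ennreal (exp (- \<beta> * U x) / partition_fn \<beta> U) \<partial>lborel)"
    unfolding gibbs_def by (subst emeasure_density) auto
  also have "\<dots> = ennreal (\<integral>x. exp (- \<beta> * U x) / partition_fn \<beta> U \<partial>lborel)"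
    using Z_finite Z_pos by (intro nn_integral_eq_integral) auto
  also have "\<dots> = 1"
    using Z_pos by (simp add: partition_fn_def)
  finally show "emeasure (gibbs \<beta> U) (space (gibbs \<beta> U)) = 1" .
qed

lemma gibbs_weight_line_derivative:
  fixes U :: "'a::euclidean_space \<Rightarrow> real"
  assumes "U differentiable (at (x + t *\<^sub>R v))"
  shows "((\<lambda>s. exp (- \<beta> * U (x + s *\<^sub>R v)) / Z) has_real_derivative
    \<beta> * (exp (- \<beta> * U (x + t *\<^sub>R v)) / Z * - frechet_derivative U (at (x + t *\<^sub>R v)) v)) (at t)"
proof -
  have "((\<lambda>s. exp (- \<beta> * U (x + s *\<^sub>R v))) has_real_derivative
      exp (- \<beta> * U (x + t *\<^sub>R v)) * (- \<beta> * frechet_derivative U (at (x + t *\<^sub>R v)) v)) (at t)"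
    using has_real_derivative_along_line[OF assms] by (auto intro!: derivative_eq_intros)
  from DERIV_cdivide[OF this, of Z] show ?thesis
    by (simp add: algebra_simps)
qed

lemma gibbs_pullback_integral_directional_force:
  fixes U :: "'a::euclidean_space \<Rightarrow> real" and P :: "'a \<Rightarrow> 'b::euclidean_space"
    and m :: "'b \<Rightarrow> real" and f :: "'a \<Rightarrow> real"
  assumes \<beta>_pos: "\<beta> > 0" and U_C1: "C1_fun U"
    and Z_finite: "integrable lborel (\<lambda>x. exp (- \<beta> * U x))"
    and lin: "linear P" and dens: "distr (gibbs \<beta> U) lborel P = density lborel m"
    and m_pos: "\<And>z. m z > 0" and m_C1: "C1_fun m"
    and Pv: "P v = c"
    and f_eq: "\<And>x. f x = - frechet_derivative U (at x) v"
    and f_int: "integrable (gibbs \<beta> U) f"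
  defines "\<phi> \<equiv> \<lambda>z. frechet_derivative m (at z) c / m z / \<beta>"
  shows "integrable (gibbs \<beta> U) (\<lambda>x. \<phi> (P x))"
    and "B \<in> sets borel \<Longrightarrow>
      (\<integral>x. indicator B (P x) * f x \<partial>gibbs \<beta> U) = (\<integral>x. indicator B (P x) * \<phi> (P x) \<partial>gibbs \<beta> U)"
proof -
  define g where "g x = exp (- \<beta> * U x) / partition_fn \<beta> U" for x
  define g' where "g' x = \<beta> * (g x * f x)" for x
  define m' where "m' z = frechet_derivative m (at z) c" for z
  have gibbs: "gibbs \<beta> U = density lborel g"
    by (simp add: gibbs_def g_def)
  have g_pos: "g x > 0" for x
    using partition_fn_pos[OF Z_finite] by (simp add: g_def)
  have g_int: "integrable lborel g"
    unfolding g_def using Z_finite by simp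
  have g_cont: "continuous_on UNIV g"
    unfolding g_def using partition_fn_pos[OF Z_finite]
    by (intro continuous_intros C1_fun_imp_continuous_on[OF U_C1]) auto
  have [measurable]: "P \<in> borel_measurable borel" "g \<in> borel_measurable borel" "f \<in> borel_measurable borel"
    using lin g_cont f_int
    by (simp_all add: borel_measurable_linear borel_measurable_continuous_onI gibbs borel_measurable_integrable)
  have "integrable lborel (\<lambda>x. g x *\<^sub>R f x)"
    using f_int g_pos unfolding gibbs by (subst (asm) integrable_density) (auto simp: less_imp_le)
  then have g'_int: "integrable lborel g'"
    unfolding g'_def by simp
  have g'_cont: "continuous_on UNIV g'"
    unfolding g'_def f_eq using C1_fun_continuous_on_frechet_derivative[OF U_C1]
    by (intro continuous_intros g_cont)
  have g_deriv: "((\<lambda>s. g (x + s *\<^sub>R v)) has_real_derivative g' (x + t *\<^sub>R v)) (at t)" for x t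
    unfolding g_def g'_def f_eq using U_C1 by (intro gibbs_weight_line_derivative) (simp add: C1_fun_def)
  have m_diff: "m differentiable (at z)" for z
    using m_C1 by (simp add: C1_fun_def)
  have m_cont: "continuous_on UNIV m" and m'_cont: "continuous_on UNIV m'"
    using m_C1 by (simp_all add: m'_def C1_fun_imp_continuous_on C1_fun_continuous_on_frechet_derivative)
  have m_deriv: "((\<lambda>s. m (z + s *\<^sub>R c)) has_real_derivative m' (z + t *\<^sub>R c)) (at t)" for z t
    unfolding m'_def by (rule has_real_derivative_along_line[OF m_diff])
  note density_derivative = pushforward_density_derivative[OF lin Pv g_pos g'_cont g_deriv g_int g'_int m_cont m'_cont
      m_deriv m_pos dens[unfolded gibbs]]
  have gibbs_integral: "(\<integral>x. h x \<partial>gibbs \<beta> U) = (\<integral>x. g x * h x \<partial>lborel)"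
    if [measurable]: "h \<in> borel_measurable borel" for h
    unfolding gibbs using g_pos by (subst integral_density) (auto simp: less_imp_le)
  have [measurable]: "m \<in> borel_measurable borel" "m' \<in> borel_measurable borel"
    using m_cont m'_cont by (simp_all add: borel_measurable_continuous_onI)
  then have [measurable]: "\<phi> \<in> borel_measurable borel"
    unfolding \<phi>_def m'_def[symmetric] by measurable
  have "integrable lborel (\<lambda>x. g x * (m' (P x) / m (P x)) / \<beta>)"
    by (rule Bochner_Integration.integrable_divide[OF density_derivative(1)])
  then have "integrable lborel (\<lambda>x. g x *\<^sub>R \<phi> (P x))"
    by (simp add: \<phi>_def m'_def)
  then show "integrable (gibbs \<beta> U) (\<lambda>x. \<phi> (P x))"
    unfolding gibbs using g_pos by (subst integrable_density) (auto simp: less_imp_le)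
  assume [measurable]: "B \<in> sets borel"
  have "(\<integral>x. indicator B (P x) * f x \<partial>gibbs \<beta> U) = (\<integral>x. indicator B (P x) * g' x / \<beta> \<partial>lborel)"
    using \<beta>_pos by (simp add: gibbs_integral g'_def ac_simps)
  also have "\<dots> = (\<integral>x. indicator B (P x) * (g x * (m' (P x) / m (P x))) / \<beta> \<partial>lborel)"
    by (simp only: integral_divide_zero density_derivative(2)[OF \<open>B \<in> sets borel\<close>])
  also have "\<dots> = (\<integral>x. g x * (indicator B (P x) * \<phi> (P x)) \<partial>lborel)"
    by (simp add: \<phi>_def m'_def ac_simps)
  also have "\<dots> = (\<integral>x. indicator B (P x) * \<phi> (P x) \<partial>gibbs \<beta> U)"
    by (simp add: gibbs_integral)
  finally show "(\<integral>x. indicator B (P x) * f x \<partial>gibbs \<beta> U) = (\<integral>x. indicator B (P x) * \<phi> (P x) \<partial>gibbs \<beta> U)" .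
qed

lemma gibbs_cond_exp_directional_force:
  fixes U :: "'a::euclidean_space \<Rightarrow> real" and P :: "'a \<Rightarrow> 'b::euclidean_space"
    and m :: "'b \<Rightarrow> real" and f :: "'a \<Rightarrow> real"
  assumes \<beta>_pos: "\<beta> > 0" and U_C1: "C1_fun U"
    and Z_finite: "integrable lborel (\<lambda>x. exp (- \<beta> * U x))"
    and lin: "linear P" and dens: "distr (gibbs \<beta> U) lborel P = density lborel m"
    and m_pos: "\<And>z. m z > 0" and m_C1: "C1_fun m"
    and c: "c \<in> Basis" and Pv: "P v = c"
    and f_eq: "\<And>x. f x = - frechet_derivative U (at x) v"
    and f_int: "integrable (gibbs \<beta> U) f"
  shows "AE x in gibbs \<beta> U. real_cond_exp (gibbs \<beta> U) (vimage_algebra (space (gibbs \<beta> U)) P borel) f x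
           = pmf_force \<beta> (partition_fn \<beta> U) m (P x) \<bullet> c"
proof -
  note eq = gibbs_pullback_integral_directional_force[OF \<beta>_pos U_C1 Z_finite lin dens m_pos m_C1 Pv f_eq f_int]
  have m_diff: "m differentiable (at z)" for z
    using m_C1 by (simp add: C1_fun_def)
  have "AE x in gibbs \<beta> U. real_cond_exp (gibbs \<beta> U) (vimage_algebra (space (gibbs \<beta> U)) P borel) f x
      = frechet_derivative m (at (P x)) c / m (P x) / \<beta>"
  proof (rule real_cond_exp_vimage_eqI[OF _ _ _ f_int eq])
    show "finite_measure (gibbs \<beta> U)"
      using prob_space_gibbs[OF Z_finite] by (simp add: prob_space_def)
    show "P \<in> gibbs \<beta> U \<rightarrow>\<^sub>M borel"
      using lin by (simp add: gibbs_def borel_measurable_linear)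
    show "(\<lambda>z. frechet_derivative m (at z) c / m z / \<beta>) \<in> borel_measurable borel"
      using m_C1 by (intro borel_measurable_continuous_onI continuous_intros C1_fun_continuous_on_frechet_derivative
          C1_fun_imp_continuous_on) (use m_pos \<beta>_pos in \<open>auto simp: less_imp_neq[symmetric]\<close>)
  qed
  then show ?thesis
    using pmf_force_inner_Basis[OF c \<beta>_pos m_diff m_pos] by (simp add: mult.commute)
qed

section \<open>Force estimators for two CG particles\<close>

lemma force_sum_inner_Basis:
  fixes U :: "real^3^'n::finite \<Rightarrow> real" and w :: "'n \<Rightarrow> real" and e :: "real^3"
  assumes e: "e \<in> Basis" and U_diff: "U differentiable (at x)"
  shows "(\<Sum>j\<in>UNIV. w j *\<^sub>R force U j x) \<bullet> e = - frechet_derivative U (at x) (\<Sum>j\<in>UNIV. w j *\<^sub>R axis j e)"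
proof -
  have lin: "linear (frechet_derivative U (at x))"
    using U_diff frechet_derivative_works has_derivative_linear by blast
  have "force U j x \<bullet> e = - frechet_derivative U (at x) (axis j e)" for j
    using e by (simp add: force_def inner_axis[symmetric] grad_inner_Basis)
  then show ?thesis
    by (simp add: inner_sum_left linear_sum[OF lin] linear_scale[OF lin] sum_negf)
qed

lemma linear_cg_map: "linear (cg_map \<zeta>1 \<zeta>2)"
  unfolding cg_map_def
  by (rule linearI) (auto simp: scaleR_add_right sum.distrib scaleR_sum_right mult.commute)

lemma cg_map_sum_axis:
  fixes \<zeta>1 \<zeta>2 w :: "'n::finite \<Rightarrow> real" and e :: "real^3"
  shows "cg_map \<zeta>1 \<zeta>2 (\<Sum>k\<in>UNIV. w k *\<^sub>R axis k e)
    = ((\<Sum>j\<in>UNIV. \<zeta>1 j * w j) *\<^sub>R e, (\<Sum>j\<in>UNIV. \<zeta>2 j * w j) *\<^sub>R e)"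
proof -
  have "(\<Sum>k\<in>UNIV. w k *\<^sub>R axis k e) $ j = w j *\<^sub>R e" for j
    by (simp add: sum_component axis_def if_distrib cong: if_cong)
  then show ?thesis
    by (simp add: cg_map_def scaleR_sum_left)
qed

text \<open>Weights \<open>w\<^sub>1, w\<^sub>2\<close> are dual to the CG map when \<open>\<Pi>\<close> sends the atom displacement
  \<open>(w\<^sub>i\<^sub>j e)\<^sub>j\<close> to the displacement \<open>e\<close> of particle \<open>i\<close> alone.\<close>

definition cg_dual_weights :: "('n::finite \<Rightarrow> real) \<Rightarrow> ('n \<Rightarrow> real) \<Rightarrow> ('n \<Rightarrow> real) \<Rightarrow> ('n \<Rightarrow> real) \<Rightarrow> bool" where
  "cg_dual_weights \<zeta>1 \<zeta>2 w1 w2 \<longleftrightarrow>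
     (\<Sum>j\<in>UNIV. \<zeta>1 j * w1 j) = 1 \<and> (\<Sum>j\<in>UNIV. \<zeta>2 j * w1 j) = 0 \<and>
     (\<Sum>j\<in>UNIV. \<zeta>1 j * w2 j) = 0 \<and> (\<Sum>j\<in>UNIV. \<zeta>2 j * w2 j) = 1"

lemma cond_exp_weighted_forces:
  fixes U :: "real^3^'n::finite \<Rightarrow> real" and \<zeta>1 \<zeta>2 w1 w2 :: "'n \<Rightarrow> real"
    and mubar :: "(real^3) \<times> (real^3) \<Rightarrow> real"
  assumes \<beta>_pos: "\<beta> > 0" and U_C1: "C1_fun U"
    and Z_finite: "integrable lborel (\<lambda>x. exp (- \<beta> * U x))"
    and mubar_density: "distr (gibbs \<beta> U) lborel (cg_map \<zeta>1 \<zeta>2) = density lborel (\<lambda>z. ennreal (mubar z))"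
    and mubar_pos: "\<forall>z. mubar z > 0" and mubar_C1: "C1_fun mubar"
    and dual: "cg_dual_weights \<zeta>1 \<zeta>2 w1 w2"
    and h_int: "integrable (gibbs \<beta> U) (\<lambda>x. (\<Sum>j\<in>UNIV. w1 j *\<^sub>R force U j x, \<Sum>j\<in>UNIV. w2 j *\<^sub>R force U j x))"
  shows "is_cond_exp_given (gibbs \<beta> U) (cg_map \<zeta>1 \<zeta>2)
    (\<lambda>x. (\<Sum>j\<in>UNIV. w1 j *\<^sub>R force U j x, \<Sum>j\<in>UNIV. w2 j *\<^sub>R force U j x)) (pmf_force \<beta> (partition_fn \<beta> U) mubar)"
  unfolding is_cond_exp_given_def
proof
  fix c :: "(real^3) \<times> (real^3)" assume c: "c \<in> Basis"
  let ?h = "\<lambda>x. (\<Sum>j\<in>UNIV. w1 j *\<^sub>R force U j x, \<Sum>j\<in>UNIV. w2 j *\<^sub>R force U j x)"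
  have U_diff: "U differentiable (at x)" for x
    using U_C1 by (simp add: C1_fun_def)
  obtain v where Pv: "cg_map \<zeta>1 \<zeta>2 v = c" and hc: "\<And>x. ?h x \<bullet> c = - frechet_derivative U (at x) v"
  proof -
    from c consider e where "e \<in> Basis" "c = (e, 0)" | e where "e \<in> Basis" "c = (0, e)"
      unfolding Basis_prod_def by auto
    then show thesis
    proof cases
      case (1 e)
      with dual show thesis
        by (intro that[of "\<Sum>k\<in>UNIV. w1 k *\<^sub>R axis k e"])
           (simp_all add: cg_map_sum_axis cg_dual_weights_def force_sum_inner_Basis U_diff inner_prod_def)
    next
      case (2 e)
      with dual show thesis
        by (intro that[of "\<Sum>k\<in>UNIV. w2 k *\<^sub>R axis k e"])
           (simp_all add: cg_map_sum_axis cg_dual_weights_def force_sum_inner_Basis U_diff inner_prod_def)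
    qed
  qed
  show "AE x in gibbs \<beta> U. real_cond_exp (gibbs \<beta> U) (vimage_algebra (space (gibbs \<beta> U)) (cg_map \<zeta>1 \<zeta>2) borel)
      (\<lambda>y. ?h y \<bullet> c) x = pmf_force \<beta> (partition_fn \<beta> U) mubar (cg_map \<zeta>1 \<zeta>2 x) \<bullet> c"
    using mubar_pos
    by (intro gibbs_cond_exp_directional_force[OF \<beta>_pos U_C1 Z_finite linear_cg_map mubar_density _ mubar_C1
          c Pv hc integrable_inner_left[OF h_int]]) auto
qed

lemma cg_dual_weights_normalized:
  fixes \<zeta>1 \<zeta>2 :: "'n::finite \<Rightarrow> real"
  assumes sum1: "(\<Sum>j\<in>UNIV. \<zeta>1 j) = 1" and sum2: "(\<Sum>j\<in>UNIV. \<zeta>2 j) = 1"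
    and disjoint: "\<forall>j. \<zeta>1 j * \<zeta>2 j = 0"
  shows "cg_dual_weights \<zeta>1 \<zeta>2 (\<lambda>j. \<zeta>1 j / (\<Sum>k\<in>UNIV. (\<zeta>1 k)\<^sup>2)) (\<lambda>j. \<zeta>2 j / (\<Sum>k\<in>UNIV. (\<zeta>2 k)\<^sup>2))"
proof -
  have sum_sq_nonzero: "(\<Sum>k\<in>UNIV. (\<zeta> k)\<^sup>2) \<noteq> 0" if "(\<Sum>j\<in>UNIV. \<zeta> j) = 1" for \<zeta> :: "'n \<Rightarrow> real"
  proof
    assume "(\<Sum>k\<in>UNIV. (\<zeta> k)\<^sup>2) = 0"
    then have "\<forall>k. \<zeta> k = 0"
      by (subst (asm) sum_nonneg_eq_0_iff) auto
    with that show False by simp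
  qed
  have cross: "(\<Sum>j\<in>UNIV. \<zeta>1 j * \<zeta>2 j) = 0" "(\<Sum>j\<in>UNIV. \<zeta>2 j * \<zeta>1 j) = 0"
    using disjoint by (auto intro!: sum.neutral)
  show ?thesis
    using sum_sq_nonzero[OF sum1] sum_sq_nonzero[OF sum2]
    by (simp add: cg_dual_weights_def sum_divide_distrib[symmetric] power2_eq_square cross)
qed

lemma cg_dual_weights_support:
  fixes \<zeta>1 \<zeta>2 :: "'n::finite \<Rightarrow> real"
  assumes sum1: "(\<Sum>j\<in>UNIV. \<zeta>1 j) = 1" and sum2: "(\<Sum>j\<in>UNIV. \<zeta>2 j) = 1"
    and disjoint: "\<forall>j. \<zeta>1 j * \<zeta>2 j = 0"
  shows "cg_dual_weights \<zeta>1 \<zeta>2 (\<lambda>j. if \<zeta>1 j \<noteq> 0 then 1 else 0) (\<lambda>j. if \<zeta>2 j \<noteq> 0 then 1 else 0)"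
proof -
  have self: "(\<Sum>j\<in>UNIV. \<zeta> j * (if \<zeta> j \<noteq> 0 then 1 else 0)) = (\<Sum>j\<in>UNIV. \<zeta> j)" for \<zeta> :: "'n \<Rightarrow> real"
    by (rule sum.cong) auto
  have cross: "(\<Sum>j\<in>UNIV. \<zeta>2 j * (if \<zeta>1 j \<noteq> 0 then 1 else 0)) = 0"
    "(\<Sum>j\<in>UNIV. \<zeta>1 j * (if \<zeta>2 j \<noteq> 0 then 1 else 0)) = 0"
    using disjoint by (auto intro!: sum.neutral)
  show ?thesis
    unfolding cg_dual_weights_def self cross sum1 sum2 by simp
qed

lemma sum_support_eq_sum_indicator_weights:
  fixes \<zeta> :: "'n::finite \<Rightarrow> real" and a :: "'n \<Rightarrow> 'b::real_vector"
  shows "(\<Sum>j\<in>{j. \<zeta> j \<noteq> 0}. a j) = (\<Sum>j\<in>UNIV. (if \<zeta> j \<noteq> 0 then 1 else 0 :: real) *\<^sub>R a j)"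
proof -
  have "(\<Sum>j\<in>UNIV. (if \<zeta> j \<noteq> 0 then 1 else 0 :: real) *\<^sub>R a j) = (\<Sum>j\<in>UNIV. if j \<in> {j. \<zeta> j \<noteq> 0} then a j else 0)"
    by (rule sum.cong) auto
  then show ?thesis
    by (simp add: sum.If_cases)
qed

theorem mainTheorem6:
  fixes \<beta> :: real
    and U :: "real^3^'n::finite \<Rightarrow> real"
    and \<zeta>1 \<zeta>2 :: "'n \<Rightarrow> real"
    and mubar :: "(real^3) \<times> (real^3) \<Rightarrow> real"
  assumes beta_pos: "\<beta> > 0"
    and U_smooth: "smooth_fun U"
    and Z_finite: "integrable lborel (\<lambda>x. exp (- \<beta> * U x))"
    and sum1: "(\<Sum>j\<in>UNIV. \<zeta>1 j) = 1"
    and sum2: "(\<Sum>j\<in>UNIV. \<zeta>2 j) = 1"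
    and disjoint: "\<forall>j. \<zeta>1 j * \<zeta>2 j = 0"
    and mubar_density: "distr (gibbs \<beta> U) lborel (cg_map \<zeta>1 \<zeta>2) = density lborel (\<lambda>z. ennreal (mubar z))"
    and mubar_pos: "\<forall>z. mubar z > 0"
    and mubar_C1: "C1_fun mubar"
  shows
    "(let h = (\<lambda>x. ((\<Sum>j\<in>UNIV. (\<zeta>1 j / (\<Sum>k\<in>UNIV. (\<zeta>1 k)\<^sup>2)) *\<^sub>R force U j x),
                      (\<Sum>j\<in>UNIV. (\<zeta>2 j / (\<Sum>k\<in>UNIV. (\<zeta>2 k)\<^sup>2)) *\<^sub>R force U j x)))
      in integrable (gibbs \<beta> U) h \<longrightarrow>
         is_cond_exp_given (gibbs \<beta> U) (cg_map \<zeta>1 \<zeta>2) h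
           (pmf_force \<beta> (partition_fn \<beta> U) mubar))
   \<and> (let h = (\<lambda>x. ((\<Sum>j\<in>{j. \<zeta>1 j \<noteq> 0}. force U j x),
                      (\<Sum>j\<in>{j. \<zeta>2 j \<noteq> 0}. force U j x)))
      in integrable (gibbs \<beta> U) h \<longrightarrow>
         is_cond_exp_given (gibbs \<beta> U) (cg_map \<zeta>1 \<zeta>2) h
           (pmf_force \<beta> (partition_fn \<beta> U) mubar))"
  using cond_exp_weighted_forces[OF beta_pos smooth_fun_imp_C1_fun[OF U_smooth] Z_finite mubar_density
      mubar_pos mubar_C1 cg_dual_weights_normalized[OF sum1 sum2 disjoint]]
    cond_exp_weighted_forces[OF beta_pos smooth_fun_imp_C1_fun[OF U_smooth] Z_finite mubar_density
      mubar_pos mubar_C1 cg_dual_weights_support[OF sum1 sum2 disjoint]]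
  unfolding Let_def sum_support_eq_sum_indicator_weights by blast

end
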